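(* Consider the fully observable discrete-time system $x_{t+1}=f(x_t,u_t,d_t)$ with $x\in\mathcal{X}$, $u\in\mathcal{U}$, $d\in\mathcal{D}$, failure set $\mathcal{F}\subseteq\mathcal{X}$, a fallback policy $\pi^{\text{shield}}:\mathcal{X}\to\mathcal{U}$, a horizon $H\ge1$, and a terminal safe set $\Omega\subseteq\mathcal{X}$ with $\Omega\cap\mathcal{F}=\emptyset$ that is robustly invariant under $\pi^{\text{shield}}$ (i.e. $f(x,\pi^{\text{shield}}(x),d)\in\Omega$ for all $x\in\Omega$, $d\in\mathcal{D}$). For $x\in\mathcal{X}$, $u\in\mathcal{U}$ define $\hat{\mathcal{X}}_0=\{x\}$, $\hat{\mathcal{X}}_1=\{f(x,u,d):d\in\mathcal{D}\}$, and $\hat{\mathcal{X}}_{\tau+1}=\{f(\hat x,\pi^{\text{shield}}(\hat x),d):\hat x\in\hat{\mathcal{X}}_\tau,d\in\mathcal{D}\}$ for $\tau\ge1$, and the switch-type filter $$\phi(x,u)=\begin{cases}u, & \hat{\mathcal{X}}_\tau\cap\mathcal{F}=\emptyset\ \forall\tau\in\{0,\dots,H\}\ \text{and}\ \hat{\mathcal{X}}_H\subseteq\Omega,\\ \pi^{\text{shield}}(x), & \text{otherwise.}\end{cases}$$ Then for every task policy $\pi^{\text{task}}:\mathcal{X}\to\mathcal{U}$ and every deployment state $x_0\in\Omega$, the system with inputs $u_t=\phi(x_t,\pi^{\text{task}}(x_t))$ satisfies $x_t\notin\mathcal{F}$ for all $t\ge0$ and all disturbance sequences $d_0,d_1,\dots\in\mathcal{D}$.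 *)

theory Defs
  imports Main
begin

fun reach_set :: "('x \<Rightarrow> 'u \<Rightarrow> 'd \<Rightarrow> 'x) \<Rightarrow> 'd set \<Rightarrow> ('x \<Rightarrow> 'u) \<Rightarrow> 'x \<Rightarrow> 'u \<Rightarrow> nat \<Rightarrow> 'x set" where
  "reach_set f D piS x u 0 = {x}"
| "reach_set f D piS x u (Suc 0) = {f x u d | d. d \<in> D}"
| "reach_set f D piS x u (Suc (Suc tau)) =
     {f y (piS y) d | y d. y \<in> reach_set f D piS x u (Suc tau) \<and> d \<in> D}"

definition switch_filter :: "('x \<Rightarrow> 'u \<Rightarrow> 'd \<Rightarrow> 'x) \<Rightarrow> 'd set \<Rightarrow> 'x set \<Rightarrow> ('x \<Rightarrow> 'u) \<Rightarrow> nat \<Rightarrow> 'x set \<Rightarrow> 'x \<Rightarrow> 'u \<Rightarrow> 'u" where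
  "switch_filter f D F piS H Omega x u =
     (if (\<forall>tau \<in> {0..H}. reach_set f D piS x u tau \<inter> F = {}) \<and> reach_set f D piS x u H \<subseteq> Omega
      then u else piS x)"

fun closed_loop :: "('x \<Rightarrow> 'u \<Rightarrow> 'd \<Rightarrow> 'x) \<Rightarrow> ('x \<Rightarrow> 'u \<Rightarrow> 'u) \<Rightarrow> ('x \<Rightarrow> 'u) \<Rightarrow> 'x \<Rightarrow> (nat \<Rightarrow> 'd) \<Rightarrow> nat \<Rightarrow> 'x" where
  "closed_loop f phi piT x0 d 0 = x0"
| "closed_loop f phi piT x0 d (Suc t) =
     (let xt = closed_loop f phi piT x0 d t in f xt (phi xt (piT xt)) (d t))"

end

theory Submission
  imports Defs
begin

text \<open>Let \<open>S\<^sub>k\<close> be the set of states from which the fallback policy avoids \<open>F\<close> for \<open>k\<close> steps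
  and then reaches \<open>\<Omega>\<close>, whatever the disturbances. The union of all \<open>S\<^sub>k\<close> contains \<open>\<Omega>\<close>,
  misses \<open>F\<close>, and is invariant under the filtered system: the fallback maps \<open>S\<^sub>k\<^sub>+\<^sub>1\<close> into
  \<open>S\<^sub>k\<close> and \<open>S\<^sub>0 = \<Omega>\<close> into itself, while an accepted input is certified, by backward
  induction along the predicted reachable sets, to lead into \<open>S\<^sub>H\<^sub>-\<^sub>1\<close>.\<close>

fun shield_safe :: "('x \<Rightarrow> 'u \<Rightarrow> 'd \<Rightarrow> 'x) \<Rightarrow> 'd set \<Rightarrow> 'x set \<Rightarrow> ('x \<Rightarrow> 'u) \<Rightarrow> 'x set \<Rightarrow> nat \<Rightarrow> 'x set"
  where
  "shield_safe f D F piS Omega 0 = Omega"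
| "shield_safe f D F piS Omega (Suc k) =
     {x. x \<notin> F \<and> (\<forall>d\<in>D. f x (piS x) d \<in> shield_safe f D F piS Omega k)}"

lemma shield_safe_disjoint:
  assumes "Omega \<inter> F = {}"
  shows "shield_safe f D F piS Omega k \<inter> F = {}"
  using assms by (cases k) auto

lemma shield_step_in_shield_safe:
  assumes Omega_inv: "\<And>x d. x \<in> Omega \<Longrightarrow> d \<in> D \<Longrightarrow> f x (piS x) d \<in> Omega"
    and "x \<in> shield_safe f D F piS Omega k" and "d \<in> D"
  shows "f x (piS x) d \<in> (\<Union>j. shield_safe f D F piS Omega j)"
proof (cases k)
  case 0
  then show ?thesis using assms by (auto intro: exI[of _ 0])
next
  case (Suc j)
  then show ?thesis using assms by auto
qed

lemma reach_set_subset_shield_safe: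
  assumes avoid: "\<forall>tau \<in> {0..H}. reach_set f D piS x u tau \<inter> F = {}"
    and terminal: "reach_set f D piS x u H \<subseteq> Omega"
    and "Suc n + k = H"
  shows "reach_set f D piS x u (Suc n) \<subseteq> shield_safe f D F piS Omega k"
  using \<open>Suc n + k = H\<close>
proof (induction k arbitrary: n)
  case 0
  then show ?case using terminal by simp
next
  case (Suc k)
  have next_safe: "reach_set f D piS x u (Suc (Suc n)) \<subseteq> shield_safe f D F piS Omega k"
    using Suc.IH[of "Suc n"] Suc.prems by simp
  show ?case
  proof
    fix y assume y: "y \<in> reach_set f D piS x u (Suc n)"
    have "y \<notin> F" using avoid y Suc.prems by auto
    moreover have "f y (piS y) d \<in> shield_safe f D F piS Omega k" if "d \<in> D" for d
      using next_safe y that by auto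
    ultimately show "y \<in> shield_safe f D F piS Omega (Suc k)" by simp
  qed
qed

lemma switch_filter_step_in_shield_safe:
  assumes "H \<ge> 1"
    and Omega_inv: "\<And>x d. x \<in> Omega \<Longrightarrow> d \<in> D \<Longrightarrow> f x (piS x) d \<in> Omega"
    and "x \<in> (\<Union>k. shield_safe f D F piS Omega k)" and "d \<in> D"
  shows "f x (switch_filter f D F piS H Omega x u) d \<in> (\<Union>k. shield_safe f D F piS Omega k)"
proof (cases "(\<forall>tau \<in> {0..H}. reach_set f D piS x u tau \<inter> F = {})
    \<and> reach_set f D piS x u H \<subseteq> Omega")
  case True
  then have "reach_set f D piS x u (Suc 0) \<subseteq> shield_safe f D F piS Omega (H - 1)"
    using reach_set_subset_shield_safe[of H f D piS x u F Omega 0] \<open>H \<ge> 1\<close> by auto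
  then show ?thesis using True \<open>d \<in> D\<close> by (auto simp: switch_filter_def)
next
  case False
  then have "switch_filter f D F piS H Omega x u = piS x"
    unfolding switch_filter_def by (rule if_not_P)
  moreover obtain k where "x \<in> shield_safe f D F piS Omega k" using assms(3) by blast
  ultimately show ?thesis
    using shield_step_in_shield_safe[of Omega D f piS, OF Omega_inv] \<open>d \<in> D\<close> by simp
qed

lemma closed_loop_invariant:
  assumes "x0 \<in> S" and "\<forall>t. d t \<in> D"
    and "\<And>x e. x \<in> S \<Longrightarrow> e \<in> D \<Longrightarrow> f x (phi x (piT x)) e \<in> S"
  shows "closed_loop f phi piT x0 d t \<in> S"
  using assms by (induction t) (simp_all add: Let_def)

theorem corollary3:
  fixes f :: "'x \<Rightarrow> 'u \<Rightarrow> 'd \<Rightarrow> 'x"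
    and X :: "'x set" and U :: "'u set" and D :: "'d set"
    and F Omega :: "'x set" and piS :: "'x \<Rightarrow> 'u" and H :: nat
  assumes f_closed: "\<And>x u d. x \<in> X \<Longrightarrow> u \<in> U \<Longrightarrow> d \<in> D \<Longrightarrow> f x u d \<in> X"
    and piS_range: "\<And>x. x \<in> X \<Longrightarrow> piS x \<in> U"
    and F_sub: "F \<subseteq> X"
    and Omega_sub: "Omega \<subseteq> X"
    and H_pos: "H \<ge> 1"
    and Omega_F: "Omega \<inter> F = {}"
    and Omega_inv: "\<And>x d. x \<in> Omega \<Longrightarrow> d \<in> D \<Longrightarrow> f x (piS x) d \<in> Omega"
  shows "\<forall>piT x0 d. (\<forall>x \<in> X. piT x \<in> U) \<longrightarrow> x0 \<in> Omega \<longrightarrow> (\<forall>t. d t \<in> D) \<longrightarrow>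
           (\<forall>t. closed_loop f (switch_filter f D F piS H Omega) piT x0 d t \<notin> F)"
proof (intro allI impI)
  fix piT x0 and d :: "nat \<Rightarrow> 'd" and t :: nat
  assume "x0 \<in> Omega" and "\<forall>t. d t \<in> D"
  let ?S = "\<Union>k. shield_safe f D F piS Omega k"
  have "x0 \<in> ?S" using \<open>x0 \<in> Omega\<close> by (auto intro: exI[of _ 0])
  then have "closed_loop f (switch_filter f D F piS H Omega) piT x0 d t \<in> ?S"
    using \<open>\<forall>t. d t \<in> D\<close>
    by (rule closed_loop_invariant)
      (rule switch_filter_step_in_shield_safe[of H Omega D f piS, OF H_pos Omega_inv])
  then show "closed_loop f (switch_filter f D F piS H Omega) piT x0 d t \<notin> F"
    using shield_safe_disjoint[OF Omega_F] by blast
qed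

end
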